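(* Let $a_2,a_3$ be integers with $1<a_2<a_3$, $A=\{1,a_2,a_3\}$, and let $SG(A,n,p)$ be a stride generator. Then no thread (with respect to $n$) of order $i\le p$ is covered by any other thread.
   Context: For integers $n$ and $i\ge 0$, an integer $x$ has an $n$-generation of order $i$ if there are integers $c_1,c_2\ge 0$ with $x+ia_3=c_2a_2+c_1$ and $c_1+c_2\le n+i$. For integers $n$ and $p\ge0$, $SG(A,n,p)$ is a stride generator if: (A) every integer $0\le x<a_3$ has an $n$-generation of some order $\le p$; (B) at least one integer $0\le x<a_3$ has no $n$-generation of order $<p$; (C) at least one integer $0\le y<a_3$ has no $(n-1)$-generation of any order $\le p+1$. Threads: for integers $e\ge 0$, $i\ge0$ with $n+i-e\ge 0$, the thread $T(e,i)$ is the integer interval $[c,d]$ with $c=ea_2-ia_3$, $d=c+(n+i)-e$, of order $i$. Only such intervals meeting $[0,a_3)$ are regarded as threads. A thread $[c_1,d_1]$ covers a thread $[c_2,d_2]$ if $c_1\le c_2$ and $d_1\ge d_2$. *)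

theory Defs
  imports Main
begin

definition has_gen :: "int \<Rightarrow> int \<Rightarrow> int \<Rightarrow> nat \<Rightarrow> int \<Rightarrow> bool" where
  "has_gen a2 a3 n i x \<longleftrightarrow>
     (\<exists>c1 c2 :: int. c1 \<ge> 0 \<and> c2 \<ge> 0 \<and> x + int i * a3 = c2 * a2 + c1 \<and> c1 + c2 \<le> n + int i)"

definition stride_generator :: "int \<Rightarrow> int \<Rightarrow> int \<Rightarrow> nat \<Rightarrow> bool" where
  "stride_generator a2 a3 n p \<longleftrightarrow>
     (\<forall>x. 0 \<le> x \<and> x < a3 \<longrightarrow> (\<exists>i\<le>p. has_gen a2 a3 n i x)) \<and>
     (\<exists>x. 0 \<le> x \<and> x < a3 \<and> (\<forall>i<p. \<not> has_gen a2 a3 n i x)) \<and>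
     (\<exists>y. 0 \<le> y \<and> y < a3 \<and> (\<forall>i\<le>p+1. \<not> has_gen a2 a3 (n - 1) i y))"

definition thr_c :: "int \<Rightarrow> int \<Rightarrow> nat \<Rightarrow> nat \<Rightarrow> int" where
  "thr_c a2 a3 e i = int e * a2 - int i * a3"

definition thr_d :: "int \<Rightarrow> int \<Rightarrow> int \<Rightarrow> nat \<Rightarrow> nat \<Rightarrow> int" where
  "thr_d a2 a3 n e i = thr_c a2 a3 e i + (n + int i) - int e"

definition is_thread :: "int \<Rightarrow> int \<Rightarrow> int \<Rightarrow> nat \<Rightarrow> nat \<Rightarrow> bool" where
  "is_thread a2 a3 n e i \<longleftrightarrow>
     n + int i - int e \<ge> 0 \<and>
     (\<exists>x. thr_c a2 a3 e i \<le> x \<and> x \<le> thr_d a2 a3 n e i \<and> 0 \<le> x \<and> x < a3)"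

definition covers :: "int \<Rightarrow> int \<Rightarrow> int \<Rightarrow> nat \<Rightarrow> nat \<Rightarrow> nat \<Rightarrow> nat \<Rightarrow> bool" where
  "covers a2 a3 n e1 i1 e2 i2 \<longleftrightarrow>
     thr_c a2 a3 e1 i1 \<le> thr_c a2 a3 e2 i2 \<and> thr_d a2 a3 n e1 i1 \<ge> thr_d a2 a3 n e2 i2"

end

theory Submission
  imports Defs
begin

text \<open>If T(e',i') covers T(e,i), then u = i - i' and v = e - e' satisfy
  0 \<le> v a2 - u a3 \<le> v - u, and u > 0. Such a pair lowers the order of every generation
  by u: replace v copies of a2 by v a2 - u a3 ones, or, if fewer than v copies of a2 are
  available, use ones only. Applied to an x of (B), which has a generation of order p by (A)
  but none of lower order, this is a contradiction, since u \<le> i \<le> p.\<close>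

lemma covers_imp_stride:
  assumes "covers a2 a3 n e' i' e i"
  defines "u \<equiv> int i - int i'" and "v \<equiv> int e - int e'"
  shows "0 \<le> v*a2 - u*a3" and "v*a2 - u*a3 \<le> v - u"
  using assms unfolding covers_def thr_d_def thr_c_def by (simp_all add: algebra_simps)

lemma stride_order_pos:
  fixes a2 a3 u v :: int
  assumes "1 < a2" "a2 < a3" "0 \<le> v*a2 - u*a3" "v*a2 - u*a3 \<le> v - u" "(u, v) \<noteq> (0, 0)"
  shows "0 < u"
proof (rule ccontr)
  assume "\<not> 0 < u"
  have "u \<le> v" and "v*(a2 - 1) \<le> u*(a3 - 1)"
    using assms(3,4) by (simp_all add: algebra_simps)
  moreover have "u*(a3 - 1) \<le> u*(a2 - 1)"
    using \<open>\<not> 0 < u\<close> assms(2) by (simp add: mult_left_mono_neg)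
  moreover have "u*(a2 - 1) \<le> v*(a2 - 1)"
    using \<open>u \<le> v\<close> assms(1) by (simp add: mult_right_mono)
  ultimately have "u*(a3 - 1) = u*(a2 - 1)" "u*(a2 - 1) = v*(a2 - 1)"
    by linarith+
  then have "u = 0" "v = 0" using assms(1,2) by simp_all
  with assms(5) show False by simp
qed

lemma has_gen_lower_order:
  fixes a2 a3 n x v :: int and j u :: nat
  assumes "1 \<le> a2" "0 \<le> a3" "0 \<le> x" "has_gen a2 a3 n j x" "u \<le> j"
    and "0 \<le> v*a2 - int u*a3" "v*a2 - int u*a3 \<le> v - int u"
  shows "has_gen a2 a3 n (j - u) x"
proof -
  define s where "s = v*a2 - int u*a3"
  obtain c1 c2 where c: "c1 \<ge> 0" "c2 \<ge> 0" "x + int j * a3 = c2*a2 + c1" "c1 + c2 \<le> n + int j"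
    using assms(4) unfolding has_gen_def by blast
  have shift: "x + int (j - u) * a3 = (c2 - v)*a2 + (c1 + s)"
    using c(3) assms(5) unfolding s_def by (simp add: algebra_simps)
  show ?thesis
  proof (cases "v \<le> c2")
    case True
    then show ?thesis unfolding has_gen_def
      using shift c assms(5,6,7)
      by (intro exI[of _ "c1 + s"] exI[of _ "c2 - v"]) (simp add: s_def)
  next
    case False
    have "(c2 - v)*a2 \<le> c2 - v" using False assms(1) by (simp add: mult_le_cancel_left1)
    then have "x + int (j - u) * a3 \<le> n + int (j - u)"
      using shift c assms(5,7) unfolding s_def of_nat_diff[OF assms(5)] by linarith
    moreover have "0 \<le> x + int (j - u) * a3" using assms(2,3) by simp
    ultimately show ?thesis unfolding has_gen_def
      by (intro exI[of _ "x + int (j - u) * a3"] exI[of _ 0]) simp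
  qed
qed

lemma stride_generator_exact_order:
  assumes "stride_generator a2 a3 n p"
  obtains x where "0 \<le> x" "x < a3" "has_gen a2 a3 n p x" "\<And>k. k < p \<Longrightarrow> \<not> has_gen a2 a3 n k x"
proof -
  from assms obtain x where x: "0 \<le> x" "x < a3" "\<forall>k<p. \<not> has_gen a2 a3 n k x"
    and "\<exists>j\<le>p. has_gen a2 a3 n j x"
    unfolding stride_generator_def by blast
  then have "has_gen a2 a3 n p x" using le_neq_implies_less by blast
  with x that show ?thesis by blast
qed

theorem lemma6:
  fixes a2 a3 n :: int and p :: nat
  assumes "1 < a2" and "a2 < a3"
    and "stride_generator a2 a3 n p"
    and "is_thread a2 a3 n e i" and "i \<le> p"
    and "is_thread a2 a3 n e' i'" and "(e', i') \<noteq> (e, i)"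
  shows "\<not> covers a2 a3 n e' i' e i"
proof
  assume "covers a2 a3 n e' i' e i"
  define v where "v = int e - int e'"
  have stride: "0 \<le> v*a2 - int (i - i')*a3" "v*a2 - int (i - i')*a3 \<le> v - int (i - i')"
    and "i' < i"
    using covers_imp_stride[OF \<open>covers a2 a3 n e' i' e i\<close>]
      stride_order_pos[OF assms(1,2), of v "int i - int i'"] assms(7)
    unfolding v_def by (auto simp: of_nat_diff)
  obtain x where x: "0 \<le> x" "has_gen a2 a3 n p x" "\<And>k. k < p \<Longrightarrow> \<not> has_gen a2 a3 n k x"
    using stride_generator_exact_order[OF assms(3)] by metis
  have "has_gen a2 a3 n (p - (i - i')) x"
    using has_gen_lower_order[OF _ _ x(1,2) _ stride] assms(1,2,5) by simp
  moreover have "p - (i - i') < p" using \<open>i' < i\<close> assms(5) by simp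
  ultimately show False using x(3) by blast
qed

end
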